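(* Let $X$ be a real vector space and let $A\subseteq X$ be convex and relatively solid. Then (1) $cor(A^c)=int_c(A^c)$, where $A^c=X\setminus A$; (2) $\delta A=vcl(A)\setminus cor(A)$, where $\delta A$ is the algebraic boundary of $A$.
   Context: For $C\subseteq X$: $cor(C):=\{x\in C:\ \forall x'\in X\ \exists \lambda'>0 \text{ with } x+\lambda x'\in C\ \forall\lambda\in[0,\lambda']\}$; $icr(C):=\{x\in C:\ \forall x'\in span(C-C)\ \exists \lambda'>0 \text{ with } x+\lambda x'\in C\ \forall\lambda\in[0,\lambda']\}$, and $C$ is relatively solid if $icr(C)\neq\emptyset$; $vcl(C):=\{b\in X:\ \exists x\in X \text{ such that } \forall\lambda'>0\ \exists\lambda\in[0,\lambda'] \text{ with } b+\lambda x\in C\}$. The algebraic boundary $\delta C$ is the set of points of $X$ belonging neither to $cor(C)$ nor to $cor(X\setminus C)$. The core convex topology $\tau_c$ is the topology on $X$ whose open sets are the unions of families of convex sets $B$ with $cor(B)=B$; $int_c$ denotes interior in $\tau_c$. *)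

theory Defs
  imports "HOL-Analysis.Analysis"
begin

definition cor :: "'a::real_vector set \<Rightarrow> 'a set" where
  "cor C = {x \<in> C. \<forall>x'. \<exists>l'>0. \<forall>l\<in>{0..l'}. x + l *\<^sub>R x' \<in> C}"

definition icr :: "'a::real_vector set \<Rightarrow> 'a set" where
  "icr C = {x \<in> C. \<forall>x'\<in>span {a - b | a b. a \<in> C \<and> b \<in> C}.
              \<exists>l'>0. \<forall>l\<in>{0..l'}. x + l *\<^sub>R x' \<in> C}"

definition relatively_solid :: "'a::real_vector set \<Rightarrow> bool" where
  "relatively_solid C \<longleftrightarrow> icr C \<noteq> {}"

definition vcl :: "'a::real_vector set \<Rightarrow> 'a set" where
  "vcl C = {b. \<exists>x. \<forall>l'>0. \<exists>l\<in>{0..l'}. b + l *\<^sub>R x \<in> C}"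

definition alg_boundary :: "'a::real_vector set \<Rightarrow> 'a set" where
  "alg_boundary C = {x. x \<notin> cor C \<and> x \<notin> cor (UNIV - C)}"

definition core_convex_topology :: "'a::real_vector topology" where
  "core_convex_topology =
     topology (\<lambda>U. \<exists>F. (\<forall>B\<in>F. convex B \<and> cor B = B) \<and> U = \<Union>F)"

definition int_c :: "'a::real_vector set \<Rightarrow> 'a set" where
  "int_c S = core_convex_topology interior_of S"

end

(*
  A point x of cor (UNIV - A) needs a convex, algebraically open neighbourhood avoiding A.
  Fix a0 in icr A and let L be the span of A - A. If x lies off the affine hull a0 + L, a
  linear functional vanishing on L and equal to 1 at x - a0 cuts out an open half-space.
  Otherwise some point z strictly between x and a0 lies outside A; the image of icr A under
  the homothety with centre z and negative ratio, pulled back along a projection onto L,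
  is such a neighbourhood, because a point of A in it would put z on a segment in A.
  Part (2) only rewrites the definitions: x is in cor (UNIV - A) iff x is not in vcl A.
*)
theory Submission
  imports Defs
begin

definition rel_core :: "'a::real_vector set \<Rightarrow> 'a set \<Rightarrow> 'a set" where
  "rel_core L C = {x \<in> C. \<forall>v\<in>L. \<exists>l'>0. \<forall>l\<in>{0..l'}. x + l *\<^sub>R v \<in> C}"

lemma cor_eq_rel_core: "cor C = rel_core UNIV C"
  by (simp add: cor_def rel_core_def)

lemma icr_eq_rel_core: "icr C = rel_core (span {a - b | a b. a \<in> C \<and> b \<in> C}) C"
  by (simp add: icr_def rel_core_def)

lemma rel_core_subset: "rel_core L C \<subseteq> C"
  by (auto simp: rel_core_def)

lemma rel_core_mono: "B \<subseteq> C \<Longrightarrow> rel_core L B \<subseteq> rel_core L C"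
  unfolding rel_core_def by blast

lemma rel_core_Int: "rel_core L (B \<inter> C) = rel_core L B \<inter> rel_core L C"
proof
  show "rel_core L (B \<inter> C) \<subseteq> rel_core L B \<inter> rel_core L C"
    by (simp add: rel_core_mono)
  show "rel_core L B \<inter> rel_core L C \<subseteq> rel_core L (B \<inter> C)"
  proof
    fix x assume x: "x \<in> rel_core L B \<inter> rel_core L C"
    have "\<exists>l'>0. \<forall>l\<in>{0..l'}. x + l *\<^sub>R v \<in> B \<inter> C" if "v \<in> L" for v
    proof -
      obtain l1 where "l1 > 0" "\<forall>l\<in>{0..l1}. x + l *\<^sub>R v \<in> B"
        using x \<open>v \<in> L\<close> by (auto simp: rel_core_def)
      moreover obtain l2 where "l2 > 0" "\<forall>l\<in>{0..l2}. x + l *\<^sub>R v \<in> C"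
        using x \<open>v \<in> L\<close> by (auto simp: rel_core_def)
      ultimately show ?thesis
        by (intro exI[of _ "min l1 l2"]) auto
    qed
    with x show "x \<in> rel_core L (B \<inter> C)"
      by (auto simp: rel_core_def)
  qed
qed

lemma convex_rel_core:
  assumes "convex C"
  shows "convex (rel_core L C)"
  unfolding convex_def
proof (intro allI impI ballI)
  fix y z :: 'a and p q :: real
  assume y: "y \<in> rel_core L C" and z: "z \<in> rel_core L C" and pq: "0 \<le> p" "0 \<le> q" "p + q = 1"
  have "\<exists>l'>0. \<forall>l\<in>{0..l'}. p *\<^sub>R y + q *\<^sub>R z + l *\<^sub>R v \<in> C" if "v \<in> L" for v
  proof -
    obtain l1 where l1: "l1 > 0" "\<forall>l\<in>{0..l1}. y + l *\<^sub>R v \<in> C"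
      using y \<open>v \<in> L\<close> by (auto simp: rel_core_def)
    obtain l2 where l2: "l2 > 0" "\<forall>l\<in>{0..l2}. z + l *\<^sub>R v \<in> C"
      using z \<open>v \<in> L\<close> by (auto simp: rel_core_def)
    have "p *\<^sub>R y + q *\<^sub>R z + l *\<^sub>R v \<in> C" if "l \<in> {0..min l1 l2}" for l
    proof -
      have "p *\<^sub>R y + q *\<^sub>R z + l *\<^sub>R v = p *\<^sub>R y + q *\<^sub>R z + (p + q) *\<^sub>R (l *\<^sub>R v)"
        using pq by simp
      also have "\<dots> = p *\<^sub>R (y + l *\<^sub>R v) + q *\<^sub>R (z + l *\<^sub>R v)"
        by (simp add: algebra_simps)
      finally show ?thesis
        using that l1 l2 pq assms by (simp add: convexD)
    qed
    then show ?thesis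
      using l1 l2 by (intro exI[of _ "min l1 l2"]) auto
  qed
  moreover have "p *\<^sub>R y + q *\<^sub>R z \<in> C"
    using y z pq assms rel_core_subset by (blast intro: convexD)
  ultimately show "p *\<^sub>R y + q *\<^sub>R z \<in> rel_core L C"
    by (simp add: rel_core_def)
qed

lemma rel_core_rel_core:
  assumes "convex C" and "subspace L"
  shows "rel_core L (rel_core L C) = rel_core L C"
proof
  show "rel_core L (rel_core L C) \<subseteq> rel_core L C"
    by (rule rel_core_subset)
  show "rel_core L C \<subseteq> rel_core L (rel_core L C)"
  proof
    fix x assume x: "x \<in> rel_core L C"
    have "\<exists>k>0. \<forall>l\<in>{0..k}. x + l *\<^sub>R w \<in> rel_core L C" if "w \<in> L" for w
    proof -
      have "2 *\<^sub>R w \<in> L"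
        using \<open>w \<in> L\<close> assms(2) by (simp add: subspace_scale)
      then obtain k where k: "k > 0" "\<forall>l\<in>{0..k}. x + l *\<^sub>R (2 *\<^sub>R w) \<in> C"
        using x unfolding rel_core_def by blast
      have "x + l *\<^sub>R w \<in> rel_core L C" if l: "l \<in> {0..k/2}" for l
      proof -
        have "\<exists>m>0. \<forall>n\<in>{0..m}. x + l *\<^sub>R w + n *\<^sub>R v \<in> C" if "v \<in> L" for v
        proof -
          have "2 *\<^sub>R v \<in> L"
            using \<open>v \<in> L\<close> assms(2) by (simp add: subspace_scale)
          then obtain m where m: "m > 0" "\<forall>n\<in>{0..m}. x + n *\<^sub>R (2 *\<^sub>R v) \<in> C"
            using x unfolding rel_core_def by blast
          \<comment> \<open>midpoint of a step \<open>2 l\<close> along \<open>w\<close> and a step \<open>2 n\<close> along \<open>v\<close>\<close>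
          have "x + l *\<^sub>R w + n *\<^sub>R v \<in> C" if "n \<in> {0..m/2}" for n
          proof -
            have "x + l *\<^sub>R w + n *\<^sub>R v =
                (1/2) *\<^sub>R (x + l *\<^sub>R (2 *\<^sub>R w)) + (1/2) *\<^sub>R (x + n *\<^sub>R (2 *\<^sub>R v))"
              by (simp add: algebra_simps flip: scaleR_add_left)
            then show ?thesis
              using k m l that assms(1) by (simp add: convexD)
          qed
          then show ?thesis
            using m by (intro exI[of _ "m/2"]) auto
        qed
        moreover have "x + l *\<^sub>R w \<in> C"
          using calculation[of 0] assms(2) by (auto simp: subspace_0)
        ultimately show ?thesis
          by (simp add: rel_core_def)
      qed
      then show ?thesis
        using k by (intro exI[of _ "k/2"]) auto
    qed
    with x show "x \<in> rel_core L (rel_core L C)"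
      by (simp add: rel_core_def)
  qed
qed

lemma cor_Int: "cor (B \<inter> C) = cor B \<inter> cor C"
  by (simp add: cor_eq_rel_core rel_core_Int)

lemma cor_open:
  fixes S :: "'a::real_normed_vector set"
  assumes "open S"
  shows "cor S = S"
proof
  show "cor S \<subseteq> S"
    by (simp add: cor_eq_rel_core rel_core_subset)
  show "S \<subseteq> cor S"
  proof
    fix x assume "x \<in> S"
    then obtain e where e: "e > 0" "ball x e \<subseteq> S"
      using assms open_contains_ball by blast
    have "\<exists>l'>0. \<forall>l\<in>{0..l'}. x + l *\<^sub>R v \<in> S" for v
    proof -
      define n where "n = norm v + 1"
      have n: "n > 0" "norm v \<le> n"
        unfolding n_def using norm_ge_zero[of v] by linarith+
      have "x + l *\<^sub>R v \<in> S" if l: "l \<in> {0..e / (2 * n)}" for l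
      proof -
        have "norm (l *\<^sub>R v) = l * norm v"
          using l by simp
        also have "\<dots> \<le> e / (2 * n) * n"
          using l n e by (intro mult_mono) auto
        also have "\<dots> < e"
          using e n by simp
        finally show ?thesis
          using e(2) by (auto simp: dist_norm)
      qed
      then show ?thesis
        using e n by (intro exI[of _ "e / (2 * n)"]) auto
    qed
    with \<open>x \<in> S\<close> show "x \<in> cor S"
      by (simp add: cor_def)
  qed
qed

lemma convex_affine_vimage:
  assumes "linear g" and "convex S"
  shows "convex {y. c + g y \<in> S}"
proof -
  have "{y. c + g y \<in> S} = g -` ((\<lambda>s. s - c) ` S)"
    by (force simp: algebra_simps)
  then show ?thesis
    using assms by (simp add: convex_linear_vimage convex_translation_subtract)
qed

lemma cor_affine_vimage:
  assumes "linear g" and "range g \<subseteq> L" and "rel_core L S = S"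
  shows "cor {y. c + g y \<in> S} = {y. c + g y \<in> S}"
proof
  show "cor {y. c + g y \<in> S} \<subseteq> {y. c + g y \<in> S}"
    by (simp add: cor_eq_rel_core rel_core_subset)
  show "{y. c + g y \<in> S} \<subseteq> cor {y. c + g y \<in> S}"
  proof
    fix y assume y: "y \<in> {y. c + g y \<in> S}"
    have "\<exists>l'>0. \<forall>l\<in>{0..l'}. c + g (y + l *\<^sub>R v) \<in> S" for v
    proof -
      have "c + g y \<in> rel_core L S" "g v \<in> L"
        using y assms(2,3) by auto
      then obtain l' where "l' > 0" "\<forall>l\<in>{0..l'}. c + g y + l *\<^sub>R g v \<in> S"
        unfolding rel_core_def by blast
      then show ?thesis
        using assms(1) by (auto simp: linear_add linear_scale add.assoc)
    qed
    with y show "y \<in> cor {y. c + g y \<in> S}"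
      by (simp add: cor_def)
  qed
qed

lemma openin_core_convex_topology:
  "openin core_convex_topology = arbitrary union_of (\<lambda>B::'a::real_vector set. convex B \<and> cor B = B)"
proof -
  have base: "istopology (arbitrary union_of (\<lambda>B::'a set. convex B \<and> cor B = B))"
    by (rule istopology_base) (simp add: convex_Int cor_Int)
  have "core_convex_topology = topology (arbitrary union_of (\<lambda>B::'a set. convex B \<and> cor B = B))"
    unfolding core_convex_topology_def union_of_def arbitrary_def
    by (rule arg_cong[where f = topology]) (intro ext; blast)
  then show ?thesis
    using topology_inverse'[OF base] by simp
qed

lemma in_int_c_iff: "x \<in> int_c S \<longleftrightarrow> (\<exists>B. convex B \<and> cor B = B \<and> x \<in> B \<and> B \<subseteq> S)"
proof
  assume "x \<in> int_c S"
  then have "\<exists>T. (arbitrary union_of (\<lambda>B. convex B \<and> cor B = B)) T \<and> x \<in> T \<and> T \<subseteq> S"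
    by (simp add: int_c_def interior_of_def openin_core_convex_topology)
  then show "\<exists>B. convex B \<and> cor B = B \<and> x \<in> B \<and> B \<subseteq> S"
    unfolding union_of_def arbitrary_def by blast
next
  assume "\<exists>B. convex B \<and> cor B = B \<and> x \<in> B \<and> B \<subseteq> S"
  then show "x \<in> int_c S"
    unfolding int_c_def interior_of_def openin_core_convex_topology
    by (auto intro: arbitrary_union_of_inc)
qed

lemma int_c_subset_cor: "int_c S \<subseteq> cor S"
proof
  fix x assume "x \<in> int_c S"
  then obtain B where "cor B = B" "x \<in> B" "B \<subseteq> S"
    by (auto simp: in_int_c_iff)
  then show "x \<in> cor S"
    using rel_core_mono[of B S UNIV] by (auto simp: cor_eq_rel_core)
qed

lemma cor_complement_iff_notin_vcl: "x \<in> cor (UNIV - A) \<longleftrightarrow> x \<notin> vcl A"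
proof -
  have "x \<in> cor (UNIV - A) \<longleftrightarrow> (\<forall>v. \<exists>l'>0. \<forall>l\<in>{0..l'}. x + l *\<^sub>R v \<notin> A)"
    unfolding cor_def by force
  also have "\<dots> \<longleftrightarrow> x \<notin> vcl A"
    unfolding vcl_def by blast
  finally show ?thesis .
qed

lemma linear_functional_separating:
  assumes "subspace L" and "v \<notin> L"
  shows "\<exists>g::'a::real_vector \<Rightarrow> real. linear g \<and> g v = 1 \<and> (\<forall>y\<in>L. g y = 0)"
proof -
  obtain K where K: "K \<subseteq> L" "independent K" "L \<subseteq> span K"
    using maximal_independent_subset[of L] by blast
  have "span K \<subseteq> L"
    using assms(1) K(1) by (simp add: span_minimal)
  then have "v \<notin> span K"
    using assms(2) by blast
  then have "independent (insert v K)"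
    using K(2) by (simp add: independent_insert)
  then obtain g :: "'a \<Rightarrow> real" where g: "linear g" "\<forall>b\<in>insert v K. g b = (if b = v then 1 else 0)"
    using linear_independent_extend[of "insert v K" "\<lambda>b. if b = v then 1 else 0"] by blast
  have "g b = 0" if "b \<in> K" for b
  proof -
    have "b \<noteq> v"
      using that \<open>v \<notin> span K\<close> span_base by blast
    then show ?thesis
      using g(2) that by simp
  qed
  then have "\<forall>y\<in>L. g y = 0"
    using linear_eq_0_on_span[OF g(1)] K(3) by blast
  then show ?thesis
    using g by auto
qed

lemma diff_in_span_differences:
  "a \<in> A \<Longrightarrow> b \<in> A \<Longrightarrow> a - b \<in> span {a - b | a b. a \<in> A \<and> b \<in> A}"
  by (rule span_base) blast

lemma convex_reflection_notin:
  assumes "convex A" and "x + t *\<^sub>R (a0 - x) \<notin> A" and "0 < t" "t < 1" and "y \<in> A"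
  shows "a0 - ((1 - t) / t) *\<^sub>R (y - x) \<notin> A"
proof
  assume a: "a0 - ((1 - t) / t) *\<^sub>R (y - x) \<in> A"
  have "t *\<^sub>R (a0 - ((1 - t) / t) *\<^sub>R (y - x)) = t *\<^sub>R a0 - (1 - t) *\<^sub>R (y - x)"
    using assms(3) by (simp add: scaleR_diff_right)
  then have "(1 - t) *\<^sub>R y + t *\<^sub>R (a0 - ((1 - t) / t) *\<^sub>R (y - x)) = x + t *\<^sub>R (a0 - x)"
    by (simp add: algebra_simps)
  moreover have "(1 - t) *\<^sub>R y + t *\<^sub>R (a0 - ((1 - t) / t) *\<^sub>R (y - x)) \<in> A"
    using assms a by (intro convexD) auto
  ultimately show False
    using assms(2) by simp
qed

lemma core_open_halfspace_nbhd:
  assumes "subspace L" and "\<forall>a\<in>A. a - a0 \<in> L" and "x - a0 \<notin> L"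
  shows "\<exists>B. convex B \<and> cor B = B \<and> x \<in> B \<and> B \<inter> A = {}"
proof -
  obtain g :: "'a \<Rightarrow> real" where g: "linear g" "g (x - a0) = 1" "\<forall>y\<in>L. g y = 0"
    using linear_functional_separating[OF assms(1,3)] by blast
  define B where "B = {y. - g a0 + g y \<in> {1/2<..}}"
  have "convex B"
    unfolding B_def by (rule convex_affine_vimage[OF g(1)]) simp
  moreover have "cor B = B"
    unfolding B_def
    by (rule cor_affine_vimage[OF g(1), of UNIV]) (simp_all flip: cor_eq_rel_core add: cor_open)
  moreover have "x \<in> B"
    using g(1,2) by (simp add: B_def linear_diff)
  moreover have "B \<inter> A = {}"
  proof -
    have "g a - g a0 = 0" if "a \<in> A" for a
      using g(1,3) assms(2) that by (metis linear_diff)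
    then show ?thesis
      by (auto simp: B_def)
  qed
  ultimately show ?thesis
    by blast
qed

lemma core_open_reflected_nbhd:
  fixes A :: "'a::real_vector set"
  assumes "convex A" and a0: "a0 \<in> icr A" and x: "x \<in> cor (UNIV - A)"
    and "x - a0 \<in> span {a - b | a b. a \<in> A \<and> b \<in> A}"
  shows "\<exists>B. convex B \<and> cor B = B \<and> x \<in> B \<and> B \<inter> A = {}"
proof -
  define L where "L = span {a - b | a b. a \<in> A \<and> b \<in> A}"
  have L: "subspace L" and icr: "icr A = rel_core L A"
    by (simp_all add: L_def icr_eq_rel_core)
  obtain l1 where l1: "l1 > 0" "\<forall>l\<in>{0..l1}. x + l *\<^sub>R (a0 - x) \<notin> A"
    using x unfolding cor_def by blast
  define t where "t = min l1 (1/2)"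
  have t: "0 < t" "t < 1" "x + t *\<^sub>R (a0 - x) \<notin> A"
    using l1 by (auto simp: t_def)
  obtain P where P: "range P \<subseteq> L" "linear P" "\<forall>v\<in>L. P v = v"
    using linear_exists_left_inverse_on[of id L] L linear_id by auto
  define s where "s = (1 - t) / t"
  define g where "g = (\<lambda>y. (- s) *\<^sub>R P y)"
  have g: "linear g" "range g \<subseteq> L"
    unfolding g_def using linear_compose_scale_right[OF P(2)] subspace_scale[OF L] P(1)
    by (auto simp del: scaleR_minus_left)
  define B where "B = {y. (a0 + s *\<^sub>R P x) + g y \<in> icr A}"
  have "convex B"
    unfolding B_def icr using convex_affine_vimage[OF g(1)] convex_rel_core[OF assms(1)] by blast
  moreover have "cor B = B"
    unfolding B_def icr using cor_affine_vimage[OF g] rel_core_rel_core[OF assms(1) L] by blast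
  moreover have "x \<in> B"
    using a0 by (simp add: B_def g_def)
  moreover have "y \<notin> B" if "y \<in> A" for y
  proof
    assume "y \<in> B"
    have "a0 \<in> A"
      using a0 by (simp add: icr_def)
    then have "(y - a0) - (x - a0) \<in> L"
      using diff_in_span_differences[OF that] assms(4) L subspace_diff unfolding L_def by blast
    then have "y - x \<in> L"
      by simp
    then have "P y - P x = y - x"
      using P(3) by (simp flip: linear_diff[OF P(2)])
    have "a0 + s *\<^sub>R P x + g y = a0 - s *\<^sub>R (P y - P x)"
      by (simp add: g_def scaleR_diff_right)
    also have "\<dots> = a0 - s *\<^sub>R (y - x)"
      using \<open>P y - P x = y - x\<close> by simp
    finally have shift: "a0 + s *\<^sub>R P x + g y = a0 - s *\<^sub>R (y - x)" .
    have "a0 + s *\<^sub>R P x + g y \<in> icr A"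
      using \<open>y \<in> B\<close> by (simp add: B_def)
    then have "a0 - s *\<^sub>R (y - x) \<in> icr A"
      unfolding shift .
    then show False
      using convex_reflection_notin[OF assms(1) t(3,1,2) that] icr rel_core_subset
      unfolding s_def by blast
  qed
  ultimately show ?thesis
    by blast
qed

lemma cor_complement_subset_int_c:
  fixes A :: "'a::real_vector set"
  assumes "convex A" and "relatively_solid A"
  shows "cor (UNIV - A) \<subseteq> int_c (UNIV - A)"
proof
  fix x assume x: "x \<in> cor (UNIV - A)"
  obtain a0 where a0: "a0 \<in> icr A"
    using assms(2) by (auto simp: relatively_solid_def)
  define L where "L = span {a - b | a b. a \<in> A \<and> b \<in> A}"
  have "\<exists>B. convex B \<and> cor B = B \<and> x \<in> B \<and> B \<inter> A = {}"
  proof (cases "x - a0 \<in> L")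
    case True
    then show ?thesis
      using core_open_reflected_nbhd[OF assms(1) a0 x] by (simp add: L_def)
  next
    case False
    have "a0 \<in> A"
      using a0 by (simp add: icr_def)
    then have "\<forall>a\<in>A. a - a0 \<in> L"
      by (simp add: L_def diff_in_span_differences)
    moreover have "subspace L"
      by (simp add: L_def)
    ultimately show ?thesis
      using core_open_halfspace_nbhd False by blast
  qed
  then show "x \<in> int_c (UNIV - A)"
    by (auto simp: in_int_c_iff)
qed

theorem proposition4p6:
  fixes A :: "'a::real_vector set"
  assumes "convex A" and "relatively_solid A"
  shows "cor (UNIV - A) = int_c (UNIV - A) \<and> alg_boundary A = vcl A - cor A"
proof
  show "cor (UNIV - A) = int_c (UNIV - A)"
    using cor_complement_subset_int_c[OF assms] int_c_subset_cor by blast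
  show "alg_boundary A = vcl A - cor A"
    unfolding alg_boundary_def using cor_complement_iff_notin_vcl by blast
qed

end
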